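(* Let $C$ be a convex set in a finite-dimensional Euclidean space $\mathcal{E}$ and let $F$ be a face of $C$. The following are equivalent: (i) $F$ is an amenable face of $C$; (ii) $C$ and $\operatorname{aff}F$ are boundedly linearly regular, i.e. for every bounded set $B$ there exists $\kappa_B>0$ such that $\operatorname{dist}(x,F)\le\kappa_B\max\{\operatorname{dist}(x,\operatorname{aff}F),\operatorname{dist}(x,C)\}$ for all $x\in B$; (iii) $C$ and $\operatorname{aff}F$ are subtransversal at every point of $F$.
   Context: A face of a convex set $C$ is a closed convex subset $F\subseteq C$ such that whenever $x,y\in C$ and $\alpha x+(1-\alpha)y\in F$ for some $\alpha\in(0,1)$, then $x,y\in F$; note $F=C\cap\operatorname{aff}F$. A face $F$ of $C$ is amenable if for every bounded set $B$ there exists $\kappa>0$ such that $\operatorname{dist}(x,F)\le\kappa\operatorname{dist}(x,C)$ for all $x\in(\operatorname{aff}F)\cap B$. Sets $C_1,C_2$ are subtransversal at $x^*\in C_1\cap C_2$ if there exist a neighbourhood $U$ of $x^*$ and $\kappa>0$ with $\operatorname{dist}(x,C_1\cap C_2)\le\kappa(\operatorname{dist}(x,C_1)+\operatorname{dist}(x,C_2))$ for all $x\in U$. *)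

theory Defs
  imports "HOL-Analysis.Analysis"
begin

definition is_face :: "'a::euclidean_space set \<Rightarrow> 'a set \<Rightarrow> bool" where
  "is_face F C \<longleftrightarrow> F \<subseteq> C \<and> closed F \<and> convex F \<and>
     (\<forall>x\<in>C. \<forall>y\<in>C. \<forall>\<alpha>::real. 0 < \<alpha> \<and> \<alpha> < 1 \<and> \<alpha> *\<^sub>R x + (1 - \<alpha>) *\<^sub>R y \<in> F \<longrightarrow> x \<in> F \<and> y \<in> F)"

definition amenable_face :: "'a::euclidean_space set \<Rightarrow> 'a set \<Rightarrow> bool" where
  "amenable_face F C \<longleftrightarrow> is_face F C \<and>
     (\<forall>B. bounded B \<longrightarrow> (\<exists>\<kappa>>0. \<forall>x \<in> affine hull F \<inter> B. infdist x F \<le> \<kappa> * infdist x C))"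

definition face_blr :: "'a::euclidean_space set \<Rightarrow> 'a set \<Rightarrow> bool" where
  "face_blr F C \<longleftrightarrow>
     (\<forall>B. bounded B \<longrightarrow> (\<exists>\<kappa>>0. \<forall>x\<in>B.
        infdist x F \<le> \<kappa> * max (infdist x (affine hull F)) (infdist x C)))"

definition subtransversal_at :: "'a::euclidean_space set \<Rightarrow> 'a set \<Rightarrow> 'a \<Rightarrow> bool" where
  "subtransversal_at C1 C2 x0 \<longleftrightarrow> x0 \<in> C1 \<inter> C2 \<and>
     (\<exists>U \<kappa>. open U \<and> x0 \<in> U \<and> \<kappa> > 0 \<and>
        (\<forall>x\<in>U. infdist x (C1 \<inter> C2) \<le> \<kappa> * (infdist x C1 + infdist x C2)))"

end

theory Submission
  imports Defs
begin

(* For a face F of a convex set C one has C \<inter> aff F = F, so everything is a statement about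
   the pair C, aff F.  (i) and (ii) agree because on a bounded set the nearest point of aff F
   stays bounded and the triangle inequality moves the bound off aff F; (ii) gives (iii) on a
   ball.  For (iii) \<Longrightarrow> (ii): subtransversality makes the closed set F relatively open in the
   connected set cl C \<inter> aff F, hence F = cl C \<inter> aff F, so max (dist(x, aff F), dist(x, C))
   vanishes only on F.  Near F subtransversality bounds dist(x, F), near any other point the
   maximum is bounded below, and compactness of cl B combines finitely many local constants. *)

lemma face_of_if_is_face:
  assumes "is_face F C"
  shows "F face_of C"
  unfolding face_of_def
proof (intro conjI ballI impI)
  show "F \<subseteq> C" "convex F"
    using assms by (auto simp: is_face_def)
  fix a b x
  assume "a \<in> C" "b \<in> C" "x \<in> F" "x \<in> open_segment a b"
  then obtain u where "0 < 1 - u" "1 - u < 1" "(1 - u) *\<^sub>R a + (1 - (1 - u)) *\<^sub>R b \<in> F"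
    by (auto simp: in_segment)
  then show "a \<in> F" "b \<in> F"
    using assms \<open>a \<in> C\<close> \<open>b \<in> C\<close> unfolding is_face_def by blast+
qed

lemma is_face_Int_affine_hull:
  fixes C F :: "'a::euclidean_space set"
  assumes "convex C" and "is_face F C"
  shows "C \<inter> affine hull F = F"
  using face_of_imp_eq_affine_Int[OF assms(1) face_of_if_is_face[OF assms(2)]] by blast

definition boundedly_linearly_regular :: "'a::metric_space set \<Rightarrow> 'a set \<Rightarrow> bool" where
  "boundedly_linearly_regular C A \<longleftrightarrow>
     (\<forall>B. bounded B \<longrightarrow> (\<exists>\<kappa>>0. \<forall>x\<in>B.
        infdist x (C \<inter> A) \<le> \<kappa> * max (infdist x A) (infdist x C)))"

lemma boundedly_linearly_regular_iff_restricted_bound: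
  fixes C A :: "'a::heine_borel set"
  assumes "closed A"
  shows "boundedly_linearly_regular C A \<longleftrightarrow>
    (\<forall>B. bounded B \<longrightarrow> (\<exists>\<kappa>>0. \<forall>x\<in>A \<inter> B. infdist x (C \<inter> A) \<le> \<kappa> * infdist x C))"
    (is "?blr \<longleftrightarrow> ?restricted")
proof
  assume blr: ?blr
  show ?restricted
  proof (intro allI impI)
    fix B :: "'a set"
    assume "bounded B"
    then obtain \<kappa> where "\<kappa> > 0"
      and "\<forall>x\<in>B. infdist x (C \<inter> A) \<le> \<kappa> * max (infdist x A) (infdist x C)"
      using blr unfolding boundedly_linearly_regular_def by blast
    then show "\<exists>\<kappa>>0. \<forall>x\<in>A \<inter> B. infdist x (C \<inter> A) \<le> \<kappa> * infdist x C"
      by (intro exI[of _ \<kappa>]) (auto simp: max_absorb2 infdist_nonneg)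
  qed
next
  assume restricted: ?restricted
  show ?blr
    unfolding boundedly_linearly_regular_def
  proof (intro allI impI)
    fix B :: "'a set"
    assume "bounded B"
    show "\<exists>\<kappa>>0. \<forall>x\<in>B. infdist x (C \<inter> A) \<le> \<kappa> * max (infdist x A) (infdist x C)"
    proof (cases "A = {}")
      case True
      then show ?thesis by (auto simp: infdist_def intro!: exI[of _ 1])
    next
      case False
      then obtain a0 where a0: "a0 \<in> A" by blast
      obtain R where R: "\<forall>y\<in>B. dist a0 y \<le> R"
        using \<open>bounded B\<close> bounded_any_center by blast
      obtain \<kappa> where "\<kappa> > 0" and \<kappa>: "\<forall>p\<in>A \<inter> cball a0 (2 * R). infdist p (C \<inter> A) \<le> \<kappa> * infdist p C"
        using restricted by (meson bounded_cball)
      show ?thesis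
      proof (intro exI[of _ "2 * \<kappa> + 1"] conjI ballI)
        fix x assume "x \<in> B"
        obtain p where "p \<in> A" and p: "infdist x A = dist x p"
          using infdist_attains_inf[OF \<open>closed A\<close> False] by metis
        have "dist x p \<le> dist x a0"
          using p infdist_le[OF a0, of x] by simp
        moreover have "dist a0 x \<le> R"
          using R \<open>x \<in> B\<close> by blast
        ultimately have "dist a0 p \<le> 2 * R"
          using dist_triangle[of a0 p x] dist_commute[of x a0] by linarith
        then have "p \<in> cball a0 (2 * R)"
          by simp
        then have "infdist p (C \<inter> A) \<le> \<kappa> * infdist p C"
          using \<kappa> \<open>p \<in> A\<close> by blast
        also have "\<dots> \<le> \<kappa> * (infdist x C + infdist x A)"
          using infdist_triangle[of p C x] p dist_commute[of p x] \<open>\<kappa> > 0\<close> by simp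
        finally have "infdist x (C \<inter> A) \<le> \<kappa> * (infdist x C + infdist x A) + infdist x A"
          using infdist_triangle[of x "C \<inter> A" p] p by linarith
        also have "\<dots> \<le> \<kappa> * (2 * max (infdist x A) (infdist x C)) + max (infdist x A) (infdist x C)"
          using \<open>\<kappa> > 0\<close> by (intro add_mono mult_left_mono) auto
        also have "\<dots> = (2 * \<kappa> + 1) * max (infdist x A) (infdist x C)"
          by (simp add: algebra_simps)
        finally show "infdist x (C \<inter> A) \<le> (2 * \<kappa> + 1) * max (infdist x A) (infdist x C)" .
      qed (use \<open>\<kappa> > 0\<close> in simp)
    qed
  qed
qed

lemma subtransversal_at_if_boundedly_linearly_regular:
  fixes C A :: "'a::euclidean_space set"
  assumes "boundedly_linearly_regular C A" and "w \<in> C \<inter> A"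
  shows "subtransversal_at C A w"
proof -
  obtain \<kappa> where "\<kappa> > 0"
    and \<kappa>: "\<forall>x\<in>ball w 1. infdist x (C \<inter> A) \<le> \<kappa> * max (infdist x A) (infdist x C)"
    using assms(1) unfolding boundedly_linearly_regular_def by (meson bounded_ball)
  have "infdist x (C \<inter> A) \<le> \<kappa> * (infdist x C + infdist x A)" if "x \<in> ball w 1" for x
  proof -
    have "max (infdist x A) (infdist x C) \<le> infdist x C + infdist x A"
      by (simp add: infdist_nonneg)
    then show ?thesis
      using \<kappa> that \<open>\<kappa> > 0\<close> by (meson mult_left_mono order.trans less_imp_le)
  qed
  then show ?thesis
    unfolding subtransversal_at_def using assms(2) \<open>\<kappa> > 0\<close> by (meson centre_in_ball open_ball zero_less_one)
qed

lemma linear_bound_on_compact_if_local: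
  fixes f g :: "'a::topological_space \<Rightarrow> real"
  assumes "compact K" and g: "\<And>x. 0 \<le> g x"
    and local: "\<And>x. x \<in> K \<Longrightarrow> \<exists>U \<kappa>. open U \<and> x \<in> U \<and> (\<forall>y\<in>U. f y \<le> \<kappa> * g y)"
  shows "\<exists>\<kappa>>0. \<forall>y\<in>K. f y \<le> \<kappa> * g y"
proof -
  obtain U \<kappa> where U: "\<And>x. x \<in> K \<Longrightarrow> open (U x) \<and> x \<in> U x \<and> (\<forall>y\<in>U x. f y \<le> \<kappa> x * g y)"
    using local by metis
  then have "\<And>x. x \<in> K \<Longrightarrow> open (U x)" and "K \<subseteq> (\<Union>x\<in>K. U x)"
    by blast+
  then obtain D where "D \<subseteq> K" "finite D" and cover: "K \<subseteq> (\<Union>x\<in>D. U x)"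
    by (rule compactE_image[OF \<open>compact K\<close>])
  define \<kappa>0 where "\<kappa>0 = 1 + (\<Sum>x\<in>D. \<bar>\<kappa> x\<bar>)"
  have "f y \<le> \<kappa>0 * g y" if "y \<in> K" for y
  proof -
    obtain x where "x \<in> D" "y \<in> U x"
      using cover \<open>y \<in> K\<close> by blast
    then have "f y \<le> \<kappa> x * g y"
      using U \<open>D \<subseteq> K\<close> by blast
    also have "\<dots> \<le> \<kappa>0 * g y"
    proof (rule mult_right_mono[OF _ g])
      have "\<bar>\<kappa> x\<bar> \<le> (\<Sum>x\<in>D. \<bar>\<kappa> x\<bar>)"
        using \<open>finite D\<close> \<open>x \<in> D\<close> by (intro member_le_sum) auto
      then show "\<kappa> x \<le> \<kappa>0"
        unfolding \<kappa>0_def by linarith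
    qed
    finally show ?thesis .
  qed
  moreover have "\<kappa>0 > 0"
    unfolding \<kappa>0_def by (simp add: add_pos_nonneg sum_nonneg)
  ultimately show ?thesis by blast
qed

lemma closure_Int_subset_if_subtransversal:
  fixes C A :: "'a::euclidean_space set"
  assumes "convex C" "convex A" "closed (C \<inter> A)" "C \<inter> A \<noteq> {}"
    and st: "\<forall>w\<in>C \<inter> A. subtransversal_at C A w"
  shows "closure C \<inter> A \<subseteq> C"
proof -
  let ?S = "closure C \<inter> A"
  \<comment> \<open>subtransversality makes C \<inter> A relatively open in the connected set ?S\<close>
  have "openin (top_of_set ?S) (C \<inter> A)"
    unfolding openin_euclidean_subtopology_iff
  proof (intro conjI ballI)
    show "C \<inter> A \<subseteq> ?S"
      using closure_subset by blast
    fix w assume "w \<in> C \<inter> A"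
    then obtain U \<kappa> where "open U" "w \<in> U"
      and U: "\<forall>z\<in>U. infdist z (C \<inter> A) \<le> \<kappa> * (infdist z C + infdist z A)"
      using st unfolding subtransversal_at_def by blast
    obtain e where "e > 0" "ball w e \<subseteq> U"
      using \<open>open U\<close> \<open>w \<in> U\<close> open_contains_ball by blast
    have "z \<in> C \<inter> A" if "z \<in> ?S" "dist z w < e" for z
    proof -
      have "infdist z C = 0" "infdist z A = 0"
        using that assms(4) in_closure_iff_infdist_zero[of C z] by auto
      then have "infdist z (C \<inter> A) \<le> 0"
        using U \<open>ball w e \<subseteq> U\<close> that(2) by (force simp: dist_commute)
      then have "infdist z (C \<inter> A) = 0"
        by (simp add: antisym infdist_nonneg)
      then show ?thesis
        using in_closed_iff_infdist_zero[OF assms(3,4)] by blast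
    qed
    then show "\<exists>e>0. \<forall>z\<in>?S. dist z w < e \<longrightarrow> z \<in> C \<inter> A"
      using \<open>e > 0\<close> by blast
  qed
  moreover have "closedin (top_of_set ?S) (C \<inter> A)"
    using assms(3) closure_subset by (intro closed_subset) auto
  moreover have "connected ?S"
    using assms(1,2) by (intro convex_connected convex_Int convex_closure)
  ultimately have "C \<inter> A = ?S"
    using assms(4) connected_clopen by blast
  then show ?thesis by blast
qed

lemma infdist_le_multiple_near_positive:
  fixes g :: "'a::metric_space \<Rightarrow> real"
  assumes "continuous_on UNIV g" and "g l > 0"
  shows "\<exists>U \<kappa>. open U \<and> l \<in> U \<and> (\<forall>y\<in>U. infdist y S \<le> \<kappa> * g y)"
proof -
  define U where "U = ball l 1 \<inter> {y. g l / 2 < g y}"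
  define \<kappa> where "\<kappa> = 2 * (infdist l S + 1) / g l"
  have "open U"
    unfolding U_def using assms(1)
    by (intro open_Int open_ball open_Collect_less continuous_on_const) auto
  moreover have "l \<in> U"
    using assms(2) by (simp add: U_def)
  moreover have "infdist y S \<le> \<kappa> * g y" if "y \<in> U" for y
  proof -
    have "infdist y S \<le> infdist l S + 1"
      using infdist_triangle[of y S l] that by (auto simp: U_def dist_commute)
    also have "\<dots> = \<kappa> * (g l / 2)"
      using assms(2) by (simp add: \<kappa>_def)
    also have "\<dots> \<le> \<kappa> * g y"
      using that assms(2) infdist_nonneg[of l S] by (intro mult_left_mono) (auto simp: U_def \<kappa>_def)
    finally show ?thesis .
  qed
  ultimately show ?thesis
    by blast
qed

lemma local_linear_bound_if_subtransversal:
  fixes C A :: "'a::euclidean_space set"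
  assumes "closed A" and closure: "closure C \<inter> A \<subseteq> C" and "C \<inter> A \<noteq> {}"
    and st: "\<forall>w\<in>C \<inter> A. subtransversal_at C A w"
  shows "\<exists>U \<kappa>. open U \<and> l \<in> U \<and>
    (\<forall>y\<in>U. infdist y (C \<inter> A) \<le> \<kappa> * max (infdist y A) (infdist y C))"
proof (cases "max (infdist l A) (infdist l C) = 0")
  case True
  then have "infdist l A = 0" "infdist l C = 0"
    using infdist_nonneg[of l A] infdist_nonneg[of l C] by linarith+
  then have "l \<in> closure C \<inter> A"
    using assms(3) in_closure_iff_infdist_zero in_closed_iff_infdist_zero[OF \<open>closed A\<close>] by blast
  then obtain U \<kappa> where "open U" "l \<in> U" and "\<kappa> > 0"
    and U: "\<forall>y\<in>U. infdist y (C \<inter> A) \<le> \<kappa> * (infdist y C + infdist y A)"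
    using st closure unfolding subtransversal_at_def by blast
  have "infdist y (C \<inter> A) \<le> (2 * \<kappa>) * max (infdist y A) (infdist y C)" if "y \<in> U" for y
  proof -
    have "infdist y (C \<inter> A) \<le> \<kappa> * (infdist y C + infdist y A)"
      using U that by blast
    also have "\<dots> \<le> \<kappa> * (2 * max (infdist y A) (infdist y C))"
      using \<open>\<kappa> > 0\<close> by (intro mult_left_mono) (auto simp: max_def)
    finally show ?thesis
      by simp
  qed
  then show ?thesis
    using \<open>open U\<close> \<open>l \<in> U\<close> by blast
next
  case False
  then show ?thesis
    by (intro infdist_le_multiple_near_positive continuous_intros)
      (simp add: order_less_le le_max_iff_disj infdist_nonneg)
qed

lemma boundedly_linearly_regular_if_subtransversal:
  fixes C A :: "'a::euclidean_space set"
  assumes "convex C" "convex A" "closed A" "closed (C \<inter> A)"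
    and st: "\<forall>w\<in>C \<inter> A. subtransversal_at C A w"
  shows "boundedly_linearly_regular C A"
  unfolding boundedly_linearly_regular_def
proof (intro allI impI)
  fix B :: "'a set"
  assume "bounded B"
  show "\<exists>\<kappa>>0. \<forall>x\<in>B. infdist x (C \<inter> A) \<le> \<kappa> * max (infdist x A) (infdist x C)"
  proof (cases "C \<inter> A = {}")
    case True
    then show ?thesis
      by (auto simp: infdist_def[of _ "{}"] le_max_iff_disj infdist_nonneg intro!: exI[of _ 1])
  next
    case False
    have "closure C \<inter> A \<subseteq> C"
      using closure_Int_subset_if_subtransversal[OF assms(1,2,4) False st] .
    then have "\<exists>\<kappa>>0. \<forall>x\<in>closure B. infdist x (C \<inter> A) \<le> \<kappa> * max (infdist x A) (infdist x C)"
      using local_linear_bound_if_subtransversal[OF \<open>closed A\<close> _ False st] \<open>bounded B\<close>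
      by (intro linear_bound_on_compact_if_local) (auto simp: compact_closure le_max_iff_disj infdist_nonneg)
    then show ?thesis
      using closure_subset by blast
  qed
qed

theorem proposition3p2:
  fixes C F :: "'a::euclidean_space set"
  assumes "convex C" and "is_face F C"
  shows "(amenable_face F C \<longleftrightarrow> face_blr F C)
       \<and> (face_blr F C \<longleftrightarrow>
            (\<forall>x\<in>F. subtransversal_at C (affine hull F) x))"
proof -
  have F: "C \<inter> affine hull F = F"
    using is_face_Int_affine_hull[OF assms] .
  have "closed F"
    using assms(2) by (simp add: is_face_def)
  have blr: "face_blr F C \<longleftrightarrow> boundedly_linearly_regular C (affine hull F)"
    unfolding face_blr_def boundedly_linearly_regular_def F ..
  have "amenable_face F C \<longleftrightarrow> boundedly_linearly_regular C (affine hull F)"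
    unfolding amenable_face_def boundedly_linearly_regular_iff_restricted_bound[OF closed_affine_hull] F
    using assms(2) by (simp add: Int_commute)
  moreover have "boundedly_linearly_regular C (affine hull F) \<longleftrightarrow>
      (\<forall>x\<in>F. subtransversal_at C (affine hull F) x)"
    using subtransversal_at_if_boundedly_linearly_regular
      boundedly_linearly_regular_if_subtransversal[OF assms(1) convex_affine_hull closed_affine_hull]
      \<open>closed F\<close> F by metis
  ultimately show ?thesis
    using blr by blast
qed

end
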